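(* Let $1\leq r<\infty$ and $q=2r-1$. If $u\in RH_q$ and $u^{r}\in A_{\infty}$, then for $s=1+\frac1{2\tau_n[u^{r}]_{A_{\infty}}}$, every cube $Q\subset\mathbb{R}^n$ and every measurable subset $E\subset Q$, $$\frac{u^{sr}(E)}{u^{sr}(Q)}\lesssim [u]_{RH_{q}}^{\frac{q}{4}} \left(\frac{u(E)}{u(Q)}\right)^{\frac1{4}}.$$
   Context: In $\mathbb{R}^n$ with Lebesgue measure, $w(E)=\int_Ew$ and $u^t(E)=\int_Eu^t$. $[w]_{RH_q}=\sup_Q\big(\frac1{|Q|}\int_Qw^q\big)^{1/q}/\big(\frac{w(Q)}{|Q|}\big)$; $[w]_{A_\infty}=\sup_Q\frac1{w(Q)}\int_QM(\chi_Qw)$. $\tau_n$ is the dimensional constant in the sharp reverse Hölder inequality: for $w\in A_\infty$ and $1\le t\le 1+\frac1{\tau_n[w]_{A_\infty}}$, $\big(\frac1{|Q|}\int_Qw^t\big)^{1/t}\le 2\frac{w(Q)}{|Q|}$. *)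

theory Defs
  imports "HOL-Analysis.Analysis"
begin

definition is_cube :: "'a::euclidean_space set \<Rightarrow> bool" where
  "is_cube Q \<longleftrightarrow> (\<exists>a h. h > 0 \<and> Q = cbox a (a + h *\<^sub>R One))"

definition wmeas :: "('a::euclidean_space \<Rightarrow> real) \<Rightarrow> 'a set \<Rightarrow> real" where
  "wmeas w E = (LINT x:E|lebesgue. w x)"

definition weight :: "('a::euclidean_space \<Rightarrow> real) \<Rightarrow> bool" where
  "weight w \<longleftrightarrow> w \<in> borel_measurable lebesgue \<and> (\<forall>x. 0 \<le> w x)
     \<and> (AE x in lebesgue. 0 < w x)
     \<and> (\<forall>Q. is_cube Q \<longrightarrow> set_integrable lebesgue Q w)"

definition RH_ratio :: "real \<Rightarrow> ('a::euclidean_space \<Rightarrow> real) \<Rightarrow> 'a set \<Rightarrow> real" where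
  "RH_ratio q w Q =
     ((LINT x:Q|lebesgue. w x powr q) / measure lebesgue Q) powr (1/q)
       / (wmeas w Q / measure lebesgue Q)"

definition in_RH :: "real \<Rightarrow> ('a::euclidean_space \<Rightarrow> real) \<Rightarrow> bool" where
  "in_RH q w \<longleftrightarrow> weight w
     \<and> (\<forall>Q. is_cube Q \<longrightarrow> set_integrable lebesgue Q (\<lambda>x. w x powr q))
     \<and> bdd_above {RH_ratio q w Q | Q. is_cube Q}"

definition RH_const :: "real \<Rightarrow> ('a::euclidean_space \<Rightarrow> real) \<Rightarrow> real" where
  "RH_const q w = (SUP Q\<in>{Q. is_cube Q}. RH_ratio q w Q)"

definition maximal :: "('a::euclidean_space \<Rightarrow> real) \<Rightarrow> 'a \<Rightarrow> ennreal" where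
  "maximal f x = (SUP Q\<in>{Q. is_cube Q \<and> x \<in> Q}.
       ennreal ((LINT y:Q|lebesgue. \<bar>f y\<bar>) / measure lebesgue Q))"

definition Ainf_const_enn :: "('a::euclidean_space \<Rightarrow> real) \<Rightarrow> ennreal" where
  "Ainf_const_enn w = (SUP Q\<in>{Q. is_cube Q}.
      (\<integral>\<^sup>+x\<in>Q. maximal (\<lambda>y. indicator Q y * w y) x \<partial>lebesgue) / ennreal (wmeas w Q))"

definition in_Ainf :: "('a::euclidean_space \<Rightarrow> real) \<Rightarrow> bool" where
  "in_Ainf w \<longleftrightarrow> weight w \<and> Ainf_const_enn w < \<infinity>"

definition Ainf_const :: "('a::euclidean_space \<Rightarrow> real) \<Rightarrow> real" where
  "Ainf_const w = enn2real (Ainf_const_enn w)"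

text \<open>tau is a constant for which the sharp reverse Hoelder inequality holds in dimension DIM('a).\<close>
definition sharp_RHI_const :: "'a::euclidean_space itself \<Rightarrow> real \<Rightarrow> bool" where
  "sharp_RHI_const _ \<tau> \<longleftrightarrow> \<tau> > 0 \<and>
     (\<forall>(w::'a \<Rightarrow> real) t Q. in_Ainf w \<longrightarrow> 1 \<le> t \<longrightarrow> t \<le> 1 + 1 / (\<tau> * Ainf_const w)
        \<longrightarrow> is_cube Q \<longrightarrow>
        set_integrable lebesgue Q (\<lambda>x. w x powr t) \<and>
        ((LINT x:Q|lebesgue. w x powr t) / measure lebesgue Q) powr (1/t)
          \<le> 2 * (wmeas w Q / measure lebesgue Q))"

end

theory Submission
  imports Defs
begin

text \<open>Write v = u^r and t = 2s - 1, so that u^(sr) is the geometric mean of v and v^t, and v is the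
  geometric mean of u and u^q. Two applications of Cauchy-Schwarz on E give
  u^(sr)(E)^4 <= u(E) u^q(E) v^t(E)^2. The reverse Hoelder inequalities for u (exponent q) and
  for v (exponent t, sharp form) bound u^q(E) and v^t(E) by the corresponding integrals over Q,
  hence by powers of the averages of u and v over Q, while Jensen's inequality bounds u^(sr)(Q)
  from below by a power of the average of v and that average from below by a power of the
  average of u. The exponents then balance to give the claim with constant
  2^(s - 1/2) <= 2^(1/2 + 1/(2 tau)), since the A_infinity constant is at least 1.\<close>

lemma set_integral_nonneg:
  fixes f :: "'a \<Rightarrow> real"
  assumes "\<And>x. x \<in> A \<Longrightarrow> 0 \<le> f x"
  shows "0 \<le> (LINT x:A|M. f x)"
  using assms unfolding set_lebesgue_integral_def
  by (auto intro!: integral_nonneg_AE split: split_indicator)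

lemma set_integral_mono_subset:
  fixes f :: "'a \<Rightarrow> real"
  assumes "set_integrable M A f" "E \<in> sets M" "E \<subseteq> A" "\<And>x. x \<in> A \<Longrightarrow> 0 \<le> f x"
  shows "(LINT x:E|M. f x) \<le> (LINT x:A|M. f x)"
  using assms set_integrable_subset[OF assms(1-3)]
  unfolding set_integrable_def set_lebesgue_integral_def
  by (auto intro!: integral_mono split: split_indicator)

lemma set_integral_Cauchy_Schwarz:
  fixes F G H :: "'a \<Rightarrow> real"
  assumes int: "set_integrable M E F" "set_integrable M E G" "set_integrable M E H"
    and nonneg: "\<And>x. x \<in> E \<Longrightarrow> 0 \<le> F x" "\<And>x. x \<in> E \<Longrightarrow> 0 \<le> G x" "\<And>x. x \<in> E \<Longrightarrow> 0 \<le> H x"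
    and dom: "\<And>x. x \<in> E \<Longrightarrow> (H x)\<^sup>2 \<le> F x * G x"
  shows "(LINT x:E|M. H x)\<^sup>2 \<le> (LINT x:E|M. F x) * (LINT x:E|M. G x)"
proof -
  have ennreal_set_integral: "ennreal (LINT x:E|M. f x) = (\<integral>\<^sup>+x. ennreal (indicator E x * f x) \<partial>M)"
    if "set_integrable M E f" "\<And>x. x \<in> E \<Longrightarrow> 0 \<le> f x" for f :: "'a \<Rightarrow> real"
    using that unfolding set_integrable_def set_lebesgue_integral_def
    by (subst nn_integral_eq_integral) (auto simp: indicator_def)
  have [measurable]: "(\<lambda>x. indicator E x * F x) \<in> borel_measurable M"
    "(\<lambda>x. indicator E x * G x) \<in> borel_measurable M"
    using int unfolding set_integrable_def by auto
  let ?f = "\<lambda>x. ennreal (sqrt (indicator E x * F x))"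
  let ?g = "\<lambda>x. ennreal (sqrt (indicator E x * G x))"
  have "ennreal ((LINT x:E|M. H x)\<^sup>2) = (\<integral>\<^sup>+x. ennreal (indicator E x * H x) \<partial>M)\<^sup>2"
    by (simp add: ennreal_set_integral int(3) nonneg set_integral_nonneg flip: ennreal_power)
  also have "\<dots> \<le> (\<integral>\<^sup>+x. ?f x * ?g x \<partial>M)\<^sup>2"
  proof (intro power_mono_ennreal nn_integral_mono)
    fix x
    have "indicator E x * H x \<le> sqrt (indicator E x * F x) * sqrt (indicator E x * G x)"
      using dom[of x] nonneg[of x] by (auto simp: indicator_def real_le_rsqrt simp flip: real_sqrt_mult)
    then show "ennreal (indicator E x * H x) \<le> ?f x * ?g x"
      using nonneg[of x] by (cases "x \<in> E") (auto simp: ennreal_leI simp flip: ennreal_mult)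
  qed
  also have "\<dots> \<le> (\<integral>\<^sup>+x. (?f x)\<^sup>2 \<partial>M) * (\<integral>\<^sup>+x. (?g x)\<^sup>2 \<partial>M)"
    by (rule Cauchy_Schwarz_nn_integral) measurable
  also have "\<dots> = ennreal ((LINT x:E|M. F x) * (LINT x:E|M. G x))"
    using nonneg
    by (simp add: ennreal_set_integral int ennreal_power ennreal_mult' set_integral_nonneg indicator_def cong: if_cong)
  finally show ?thesis
    by (simp add: ennreal_le_iff set_integral_nonneg nonneg)
qed

lemma set_integral_powr_Cauchy_Schwarz:
  fixes w :: "'a \<Rightarrow> real"
  assumes "\<alpha> + \<beta> = 2 * \<gamma>"
    and "set_integrable M E (\<lambda>x. w x powr \<alpha>)" "set_integrable M E (\<lambda>x. w x powr \<beta>)"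
      "set_integrable M E (\<lambda>x. w x powr \<gamma>)"
  shows "(LINT x:E|M. w x powr \<gamma>)\<^sup>2 \<le> (LINT x:E|M. w x powr \<alpha>) * (LINT x:E|M. w x powr \<beta>)"
  by (rule set_integral_Cauchy_Schwarz[OF assms(2-4)])
    (simp_all add: assms(1) power2_eq_square flip: powr_add)

lemma powr_above_tangent:
  fixes c y p :: real
  assumes "0 \<le> y" "0 < c" "1 \<le> p"
  shows "c powr p + p * c powr (p - 1) * (y - c) \<le> y powr p"
proof (cases "y = 0")
  case True
  have "c powr p = c powr (p - 1) * c"
    using \<open>0 < c\<close> by (simp add: powr_diff)
  then show ?thesis using True assms by (simp add: algebra_simps mult_left_mono)
next
  case False
  have deriv: "((\<lambda>z. z powr p) has_real_derivative p * c powr (p - 1)) (at c within {0<..})"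
    using has_real_derivative_powr[OF \<open>0 < c\<close>] by (rule has_field_derivative_at_within)
  have "p * c powr (p - 1) * (y - c) \<le> y powr p - c powr p"
    by (rule convex_on_imp_above_tangent[OF powr_convex[OF \<open>1 \<le> p\<close>] _ _ _ deriv])
      (use assms False in \<open>auto simp: interior_open\<close>)
  then show ?thesis by simp
qed

lemma powr_average_le_set_integral:
  fixes f :: "'a \<Rightarrow> real"
  assumes A: "A \<in> sets M" "emeasure M A < \<infinity>" "0 < measure M A"
    and f: "set_integrable M A f" "set_integrable M A (\<lambda>x. f x powr p)" "\<And>x. x \<in> A \<Longrightarrow> 0 \<le> f x"
    and "1 \<le> p"
  shows "measure M A * ((LINT x:A|M. f x) / measure M A) powr p \<le> (LINT x:A|M. f x powr p)"
proof (cases "(LINT x:A|M. f x) = 0")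
  case True
  then show ?thesis using \<open>1 \<le> p\<close> by (simp add: set_integral_nonneg)
next
  case False
  define c where "c = (LINT x:A|M. f x) / measure M A"
  have "0 < c" using False A f(3) set_integral_nonneg[of A f M] by (simp add: c_def)
  have const: "set_integrable M A (\<lambda>_. k)" for k :: real
    using A unfolding set_integrable_def by simp
  have "measure M A * c powr p
      = (LINT x:A|M. c powr p + p * c powr (p - 1) * (f x - c))"
    using f(1) const A by (simp add: c_def set_integral_const)
  also have "\<dots> \<le> (LINT x:A|M. f x powr p)"
    using f const \<open>0 < c\<close> \<open>1 \<le> p\<close> by (intro set_integral_mono powr_above_tangent) auto
  finally show ?thesis by (simp add: c_def)
qed

text \<open>After taking logarithms the conclusion is the sum of the logarithmic forms of the hypotheses
  with weights 1/2, 1/4, 1/2, 1/4, 1 and 1/2.\<close>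
lemma ratio_le_from_estimates:
  fixes m a b c K X Y V W D F r s :: real
  assumes pos: "0 < m" "0 < a" "0 < b"
    and nonneg: "0 \<le> X" "0 \<le> V" "0 \<le> W" "0 \<le> D" "0 \<le> F" "0 \<le> c" "0 \<le> K"
    and X_le: "X\<^sup>2 \<le> V * W" and V_le: "V\<^sup>2 \<le> D * F"
    and W_le: "W \<le> m * (c * b) powr (2 * s - 1)" and F_le: "F \<le> m * (K * a) powr (2 * r - 1)"
    and Y_ge: "m * b powr s \<le> Y" and a_le: "a powr r \<le> b"
  shows "X / Y \<le> c powr (s - 1/2) * K powr ((2 * r - 1) / 4) * (D / (m * a)) powr (1/4)"
proof (cases "X = 0")
  case True
  then show ?thesis by simp
next
  case False
  then have "0 < X" using nonneg by simp
  then have "0 < V * W" using X_le by (metis zero_less_power order_less_le_trans)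
  then have "0 < V" "0 < W" using nonneg by (simp_all add: zero_less_mult_iff)
  then have "0 < D * F" using V_le by (metis zero_less_power order_less_le_trans)
  then have "0 < D" "0 < F" using nonneg by (simp_all add: zero_less_mult_iff)
  have "0 < c" using \<open>0 < W\<close> W_le nonneg by (cases "c = 0") auto
  have "0 < K" using \<open>0 < F\<close> F_le nonneg by (cases "K = 0") auto
  have "0 < Y" using pos by (intro order_less_le_trans[OF _ Y_ge]) simp
  have "2 * ln X \<le> ln V + ln W"
    using ln_le_cancel_iff[of "X\<^sup>2" "V * W"] X_le \<open>0 < X\<close> \<open>0 < V\<close> \<open>0 < W\<close>
    by (simp add: ln_mult ln_realpow)
  moreover have "2 * ln V \<le> ln D + ln F"
    using ln_le_cancel_iff[of "V\<^sup>2" "D * F"] V_le \<open>0 < V\<close> \<open>0 < D\<close> \<open>0 < F\<close>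
    by (simp add: ln_mult ln_realpow)
  moreover have "ln W \<le> ln m + (2 * s - 1) * (ln c + ln b)"
    using ln_le_cancel_iff[of W "m * (c * b) powr (2 * s - 1)"] W_le \<open>0 < W\<close> \<open>0 < c\<close> pos by (simp add: ln_mult ln_powr)
  moreover have "ln F \<le> ln m + (2 * r - 1) * (ln K + ln a)"
    using ln_le_cancel_iff[of F "m * (K * a) powr (2 * r - 1)"] F_le \<open>0 < F\<close> \<open>0 < K\<close> pos by (simp add: ln_mult ln_powr)
  moreover have "ln m + s * ln b \<le> ln Y"
    using ln_le_cancel_iff[of "m * b powr s" Y] Y_ge \<open>0 < Y\<close> pos by (simp add: ln_mult ln_powr)
  moreover have "r * ln a \<le> ln b"
    using ln_le_cancel_iff[of "a powr r" b] a_le pos by (simp add: ln_powr)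
  ultimately have "ln (X / Y) \<le> ln (c powr (s - 1/2) * K powr ((2 * r - 1) / 4) * (D / (m * a)) powr (1/4))"
    using \<open>0 < X\<close> \<open>0 < Y\<close> \<open>0 < c\<close> \<open>0 < K\<close> \<open>0 < D\<close> pos
    by (simp add: ln_mult ln_div ln_powr field_simps)
  then show ?thesis
    using \<open>0 < X\<close> \<open>0 < Y\<close> \<open>0 < c\<close> \<open>0 < K\<close> \<open>0 < D\<close> pos by simp
qed

lemma cube_measurable:
  assumes "is_cube Q"
  shows "Q \<in> sets lebesgue" "emeasure lebesgue Q < \<infinity>"
proof -
  have "Q \<in> lmeasurable" using assms unfolding is_cube_def by auto
  then show "Q \<in> sets lebesgue" "emeasure lebesgue Q < \<infinity>"
    using fmeasurableD2 by (auto simp only: top.not_eq_extremum infinity_ennreal_def)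
qed

lemma measure_cube_pos: "is_cube (Q :: 'a::euclidean_space set) \<Longrightarrow> 0 < measure lebesgue Q"
  unfolding is_cube_def by (auto simp: inner_simps prod_pos)

lemma unit_cube: "is_cube (cbox 0 (One :: 'a::euclidean_space))"
  unfolding is_cube_def by (intro exI[of _ 0] exI[of _ 1]) simp

lemma wmeas_cube_pos:
  assumes "weight w" "is_cube Q"
  shows "0 < wmeas w Q"
proof -
  have int: "integrable lebesgue (\<lambda>x. indicator Q x * w x)"
    and nonneg: "\<And>x. 0 \<le> indicator Q x * w x" and pos: "AE x in lebesgue. 0 < w x"
    using assms unfolding weight_def set_integrable_def by auto
  have "\<not> (AE x in lebesgue. indicator Q x * w x = 0)"
  proof
    assume "AE x in lebesgue. indicator Q x * w x = 0"
    with pos have "AE x in lebesgue. x \<notin> Q"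
      by eventually_elim (auto simp: indicator_def)
    then have "Q \<in> null_sets lebesgue"
      using cube_measurable[OF assms(2)] by (simp add: AE_iff_null_sets)
    then show False
      using measure_cube_pos[OF assms(2)] by (simp add: measure_def null_setsD1)
  qed
  then show ?thesis
    using integral_nonneg_eq_0_iff_AE[OF int] nonneg integral_nonneg_AE[of _ lebesgue]
    unfolding wmeas_def set_lebesgue_integral_def by (auto simp: order_less_le)
qed

lemma average_le_maximal:
  assumes "is_cube Q" "x \<in> Q"
  shows "ennreal ((LINT y:Q|lebesgue. \<bar>f y\<bar>) / measure lebesgue Q) \<le> maximal f x"
  unfolding maximal_def using assms by (intro SUP_upper) auto

lemma Ainf_const_ge_1:
  assumes "in_Ainf (w :: 'a::euclidean_space \<Rightarrow> real)"
  shows "1 \<le> Ainf_const w"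
proof -
  have "weight w" and finite: "Ainf_const_enn w < \<infinity>"
    using assms unfolding in_Ainf_def by auto
  define Q :: "'a set" where "Q = cbox 0 One"
  have Q: "is_cube Q" "Q \<in> sets lebesgue" "emeasure lebesgue Q < \<infinity>"
    using unit_cube cube_measurable[OF unit_cube] unfolding Q_def by auto
  have "0 < wmeas w Q" using wmeas_cube_pos[OF \<open>weight w\<close> Q(1)] .
  have average: "(LINT y:Q|lebesgue. \<bar>indicator Q y * w y\<bar>) = wmeas w Q"
    using \<open>weight w\<close> unfolding wmeas_def weight_def
    by (intro set_lebesgue_integral_cong) (auto simp: Q)
  have "ennreal (wmeas w Q) = (\<integral>\<^sup>+x\<in>Q. ennreal (wmeas w Q / measure lebesgue Q) \<partial>lebesgue)"
    using Q measure_cube_pos[OF Q(1)] \<open>0 < wmeas w Q\<close>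
    by (simp add: nn_integral_cmult_indicator emeasure_eq_ennreal_measure less_top
        flip: ennreal_mult)
  also have "\<dots> \<le> (\<integral>\<^sup>+x\<in>Q. maximal (\<lambda>y. indicator Q y * w y) x \<partial>lebesgue)"
    using average_le_maximal[OF Q(1), of _ "\<lambda>y. indicator Q y * w y"] unfolding average
    by (intro nn_integral_mono) (auto split: split_indicator)
  finally have "ennreal (wmeas w Q) / ennreal (wmeas w Q)
      \<le> (\<integral>\<^sup>+x\<in>Q. maximal (\<lambda>y. indicator Q y * w y) x \<partial>lebesgue) / ennreal (wmeas w Q)"
    by (rule divide_right_mono_ennreal)
  then have "1 \<le> (\<integral>\<^sup>+x\<in>Q. maximal (\<lambda>y. indicator Q y * w y) x \<partial>lebesgue) / ennreal (wmeas w Q)"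
    using \<open>0 < wmeas w Q\<close> by (simp add: divide_ennreal)
  also have "\<dots> \<le> Ainf_const_enn w"
    unfolding Ainf_const_enn_def using Q(1) by (intro SUP_upper) auto
  finally show ?thesis
    using finite enn2real_mono[of 1 "Ainf_const_enn w"] by (simp add: Ainf_const_def)
qed

definition reverse_Hoelder :: "real \<Rightarrow> real \<Rightarrow> ('a::euclidean_space \<Rightarrow> real) \<Rightarrow> bool" where
  "reverse_Hoelder c t w \<longleftrightarrow> (\<forall>Q. is_cube Q \<longrightarrow>
     set_integrable lebesgue Q (\<lambda>x. w x powr t) \<and>
     ((LINT x:Q|lebesgue. w x powr t) / measure lebesgue Q) powr (1/t)
       \<le> c * (wmeas w Q / measure lebesgue Q))"

lemma in_RH_reverse_Hoelder:
  assumes "in_RH q w"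
  shows "reverse_Hoelder (RH_const q w) q w"
  unfolding reverse_Hoelder_def
proof (intro allI impI conjI)
  fix Q :: "'a set"
  assume "is_cube Q"
  then show "set_integrable lebesgue Q (\<lambda>x. w x powr q)"
    using assms unfolding in_RH_def by auto
  have "0 < wmeas w Q / measure lebesgue Q"
    using assms wmeas_cube_pos[OF _ \<open>is_cube Q\<close>] measure_cube_pos[OF \<open>is_cube Q\<close>]
    unfolding in_RH_def by simp
  moreover have "RH_ratio q w Q \<le> RH_const q w"
    using assms \<open>is_cube Q\<close> unfolding in_RH_def RH_const_def
    by (intro cSUP_upper) (auto simp: setcompr_eq_image)
  ultimately show "((LINT x:Q|lebesgue. w x powr q) / measure lebesgue Q) powr (1/q)
      \<le> RH_const q w * (wmeas w Q / measure lebesgue Q)"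
    unfolding RH_ratio_def by (metis pos_divide_le_eq)
qed

lemma reverse_Hoelder_const_nonneg:
  assumes "weight (w :: 'a::euclidean_space \<Rightarrow> real)" "reverse_Hoelder c t w"
  shows "0 \<le> c"
proof -
  define Q :: "'a set" where "Q = cbox 0 One"
  have "is_cube Q" unfolding Q_def by (rule unit_cube)
  then have "((LINT x:Q|lebesgue. w x powr t) / measure lebesgue Q) powr (1/t)
      \<le> c * (wmeas w Q / measure lebesgue Q)"
    using assms(2) unfolding reverse_Hoelder_def by blast
  then have "0 \<le> c * (wmeas w Q / measure lebesgue Q)"
    by (rule order_trans[OF powr_ge_zero])
  then show ?thesis
    using wmeas_cube_pos[OF assms(1) \<open>is_cube Q\<close>] measure_cube_pos[OF \<open>is_cube Q\<close>]
    by (simp add: zero_le_mult_iff zero_le_divide_iff)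
qed

lemma reverse_Hoelder_set_integral_le:
  assumes "reverse_Hoelder c t w" "0 < t" "is_cube Q" "E \<in> sets lebesgue" "E \<subseteq> Q"
  shows "(LINT x:E|lebesgue. w x powr t) \<le> measure lebesgue Q * (c * (wmeas w Q / measure lebesgue Q)) powr t"
proof -
  let ?m = "measure lebesgue Q" and ?I = "LINT x:Q|lebesgue. w x powr t"
  have int: "set_integrable lebesgue Q (\<lambda>x. w x powr t)"
    and root: "(?I / ?m) powr (1/t) \<le> c * (wmeas w Q / ?m)"
    using assms(1,3) unfolding reverse_Hoelder_def by auto
  have "(LINT x:E|lebesgue. w x powr t) \<le> ?I"
    using set_integral_mono_subset[OF int assms(4,5)] by simp
  also have "\<dots> = ?m * ((?I / ?m) powr (1/t)) powr t"
    using \<open>0 < t\<close> measure_cube_pos[OF \<open>is_cube Q\<close>] by (simp add: powr_powr set_integral_nonneg)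
  also have "\<dots> \<le> ?m * (c * (wmeas w Q / ?m)) powr t"
    using root \<open>0 < t\<close> by (intro mult_left_mono powr_mono2) auto
  finally show ?thesis .
qed

lemma weight_average_powr_le:
  assumes "weight w" "is_cube Q" "1 \<le> p" "set_integrable lebesgue Q (\<lambda>x. w x powr p)"
  shows "measure lebesgue Q * (wmeas w Q / measure lebesgue Q) powr p \<le> wmeas (\<lambda>x. w x powr p) Q"
  using powr_average_le_set_integral[OF cube_measurable[OF assms(2)] measure_cube_pos[OF assms(2)]]
    assms unfolding weight_def wmeas_def by simp

lemma weighted_measure_ratio_le:
  fixes u :: "'a::euclidean_space \<Rightarrow> real"
  assumes "weight u" "weight (\<lambda>x. u x powr r)" "1 \<le> r" "1 \<le> s"
    and RH_u: "reverse_Hoelder K (2 * r - 1) u"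
    and RH_v: "reverse_Hoelder c (2 * s - 1) (\<lambda>x. u x powr r)"
    and Q: "is_cube Q" "set_integrable lebesgue Q (\<lambda>x. u x powr (s * r))"
    and E: "E \<in> sets lebesgue" "E \<subseteq> Q"
  shows "wmeas (\<lambda>x. u x powr (s * r)) E / wmeas (\<lambda>x. u x powr (s * r)) Q
    \<le> c powr (s - 1/2) * K powr ((2 * r - 1) / 4) * (wmeas u E / wmeas u Q) powr (1/4)"
proof -
  define v where "v = (\<lambda>x. u x powr r)"
  define m where "m = measure lebesgue Q"
  define a where "a = wmeas u Q / m"
  define b where "b = wmeas v Q / m"
  have "0 < m" "0 < a" "0 < b"
    using measure_cube_pos[OF Q(1)] wmeas_cube_pos[OF assms(1) Q(1)] wmeas_cube_pos[OF assms(2) Q(1)]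
    by (simp_all add: m_def a_def b_def v_def)
  have u_nonneg: "0 \<le> u x" for x
    using assms(1) unfolding weight_def by simp
  have int_Q: "set_integrable lebesgue Q v"
    "set_integrable lebesgue Q (\<lambda>x. u x powr (2 * r - 1))"
    "set_integrable lebesgue Q (\<lambda>x. v x powr (2 * s - 1))"
    using assms(2) RH_u RH_v Q(1) unfolding weight_def reverse_Hoelder_def v_def by auto
  have int_E: "set_integrable lebesgue E u" "set_integrable lebesgue E v"
    "set_integrable lebesgue E (\<lambda>x. u x powr (2 * r - 1))"
    "set_integrable lebesgue E (\<lambda>x. v x powr (2 * s - 1))"
    "set_integrable lebesgue E (\<lambda>x. u x powr (s * r))"
    using int_Q Q(2) assms(1) Q(1) unfolding weight_def by (auto intro: set_integrable_subset[OF _ E])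
  have X_le: "(wmeas (\<lambda>x. u x powr (s * r)) E)\<^sup>2 \<le> wmeas v E * (LINT x:E|lebesgue. v x powr (2 * s - 1))"
    using set_integral_powr_Cauchy_Schwarz[of r "r * (2 * s - 1)" "s * r" lebesgue E u] int_E
    by (simp add: wmeas_def v_def powr_powr algebra_simps)
  have V_le: "(wmeas v E)\<^sup>2 \<le> wmeas u E * (LINT x:E|lebesgue. u x powr (2 * r - 1))"
    using set_integral_powr_Cauchy_Schwarz[of 1 "2 * r - 1" r lebesgue E u] int_E u_nonneg
    by (simp add: wmeas_def v_def)
  have W_le: "(LINT x:E|lebesgue. v x powr (2 * s - 1)) \<le> m * (c * b) powr (2 * s - 1)"
    using reverse_Hoelder_set_integral_le[OF RH_v _ Q(1) E] \<open>1 \<le> s\<close> by (simp add: m_def b_def v_def)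
  have F_le: "(LINT x:E|lebesgue. u x powr (2 * r - 1)) \<le> m * (K * a) powr (2 * r - 1)"
    using reverse_Hoelder_set_integral_le[OF RH_u _ Q(1) E] \<open>1 \<le> r\<close> by (simp add: m_def a_def)
  have Y_ge: "m * b powr s \<le> wmeas (\<lambda>x. u x powr (s * r)) Q"
    using weight_average_powr_le[OF assms(2) Q(1) \<open>1 \<le> s\<close>] Q(2)
    by (simp add: m_def b_def v_def powr_powr mult.commute)
  have a_le: "a powr r \<le> b"
    using weight_average_powr_le[OF assms(1) Q(1) \<open>1 \<le> r\<close>] int_Q(1) \<open>0 < m\<close>
    by (simp add: m_def a_def b_def v_def pos_le_divide_eq mult.commute)
  have nonneg: "0 \<le> wmeas (\<lambda>x. u x powr (s * r)) E" "0 \<le> wmeas v E"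
    "0 \<le> (LINT x:E|lebesgue. v x powr (2 * s - 1))" "0 \<le> wmeas u E"
    "0 \<le> (LINT x:E|lebesgue. u x powr (2 * r - 1))"
    by (simp_all add: wmeas_def set_integral_nonneg u_nonneg v_def)
  have "wmeas (\<lambda>x. u x powr (s * r)) E / wmeas (\<lambda>x. u x powr (s * r)) Q
    \<le> c powr (s - 1/2) * K powr ((2 * r - 1) / 4) * (wmeas u E / (m * a)) powr (1/4)"
    by (rule ratio_le_from_estimates[OF \<open>0 < m\<close> \<open>0 < a\<close> \<open>0 < b\<close> nonneg
          reverse_Hoelder_const_nonneg[OF assms(2) RH_v] reverse_Hoelder_const_nonneg[OF assms(1) RH_u]
          X_le V_le W_le F_le Y_ge a_le])
  then show ?thesis
    using \<open>0 < m\<close> by (simp add: a_def)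
qed

lemma sharp_RHI_reverse_Hoelder:
  assumes "sharp_RHI_const TYPE('a::euclidean_space) \<tau>" "in_Ainf (w :: 'a \<Rightarrow> real)"
    and "1 \<le> t" "t \<le> 1 + 1 / (\<tau> * Ainf_const w)"
  shows "reverse_Hoelder 2 t w"
  using assms unfolding sharp_RHI_const_def reverse_Hoelder_def by simp

lemma weighted_measure_ratio_le_sharp:
  fixes u :: "'a::euclidean_space \<Rightarrow> real"
  assumes "1 \<le> r" "sharp_RHI_const TYPE('a) \<tau>"
    and u: "in_RH (2 * r - 1) u" "in_Ainf (\<lambda>x. u x powr r)"
    and s: "s = 1 + 1 / (2 * \<tau> * Ainf_const (\<lambda>x. u x powr r))"
    and QE: "is_cube Q" "E \<in> sets lebesgue" "E \<subseteq> Q"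
  shows "wmeas (\<lambda>x. u x powr (s * r)) E / wmeas (\<lambda>x. u x powr (s * r)) Q
    \<le> 2 powr (1/2 + 1 / (2 * \<tau>)) * RH_const (2 * r - 1) u powr ((2 * r - 1) / 4)
      * (wmeas u E / wmeas u Q) powr (1/4)"
proof -
  have "0 < \<tau>" using assms(2) unfolding sharp_RHI_const_def by simp
  moreover have "1 \<le> Ainf_const (\<lambda>x. u x powr r)" using u(2) by (rule Ainf_const_ge_1)
  ultimately have "1 \<le> s" "s - 1/2 \<le> 1/2 + 1 / (2 * \<tau>)"
    by (auto simp: s field_simps)
  have RH_v: "reverse_Hoelder 2 t (\<lambda>x. u x powr r)" if "1 \<le> t" "t \<le> 2 * s - 1" for t
    using sharp_RHI_reverse_Hoelder[OF assms(2) u(2)] that by (simp add: s)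
  have "set_integrable lebesgue Q (\<lambda>x. u x powr (s * r))"
    using RH_v[of s] \<open>1 \<le> s\<close> QE(1) unfolding reverse_Hoelder_def by (simp add: powr_powr mult.commute)
  then have "wmeas (\<lambda>x. u x powr (s * r)) E / wmeas (\<lambda>x. u x powr (s * r)) Q
      \<le> 2 powr (s - 1/2) * (RH_const (2 * r - 1) u powr ((2 * r - 1) / 4) * (wmeas u E / wmeas u Q) powr (1/4))"
    using weighted_measure_ratio_le[OF _ _ \<open>1 \<le> r\<close> \<open>1 \<le> s\<close> in_RH_reverse_Hoelder RH_v QE(1) _ QE(2,3)]
      u \<open>1 \<le> s\<close> by (simp add: in_RH_def in_Ainf_def mult.assoc)
  also have "\<dots> \<le> 2 powr (1/2 + 1 / (2 * \<tau>))
      * (RH_const (2 * r - 1) u powr ((2 * r - 1) / 4) * (wmeas u E / wmeas u Q) powr (1/4))"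
    using \<open>s - 1/2 \<le> 1/2 + 1 / (2 * \<tau>)\<close> by (intro mult_right_mono powr_mono) auto
  finally show ?thesis by (simp add: mult.assoc)
qed

theorem lemma3p1:
  fixes r \<tau> :: real
  assumes "1 \<le> r"
    and "sharp_RHI_const TYPE('a::euclidean_space) \<tau>"
  shows "\<exists>C>0. \<forall>u::'a \<Rightarrow> real. in_RH (2*r - 1) u \<and> in_Ainf (\<lambda>x. u x powr r) \<longrightarrow>
          (let s = 1 + 1 / (2 * \<tau> * Ainf_const (\<lambda>x. u x powr r)) in
           \<forall>Q E. is_cube Q \<and> E \<in> sets lebesgue \<and> E \<subseteq> Q \<longrightarrow>
             wmeas (\<lambda>x. u x powr (s*r)) E / wmeas (\<lambda>x. u x powr (s*r)) Q
               \<le> C * RH_const (2*r - 1) u powr ((2*r - 1)/4) * (wmeas u E / wmeas u Q) powr (1/4))"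
proof -
  have "0 < 2 powr (1/2 + 1 / (2 * \<tau>))" by simp
  with weighted_measure_ratio_le_sharp[OF assms] show ?thesis
    unfolding Let_def by blast
qed

end
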